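(* Let $p>5$ be a prime and $A\subseteq\mathbb{F}_p$ satisfy $A-A\doteq\mathcal{R}_p$. Then the multiplier subgroup $M_A$ has odd order; equivalently, $-1\notin M_A$.
   Context: $\mathcal{R}_p$ is the set of nonzero quadratic residues modulo $p$. $A-A\doteq S$ means: every element of $S$ has exactly one representation as $a'-a''$ with $a',a''\in A$, and every difference $a'-a''$ with $a'\ne a''$ in $A$ lies in $S$. An element $\mu\in\mathbb{F}_p^\times$ is a multiplier of $A$ if $\mu A=A+g$ for some $g\in\mathbb{F}_p$, where $\mu A=\{\mu a\colon a\in A\}$; the multipliers form a subgroup $M_A\le\mathbb{F}_p^\times$. *)

theory Defs
  imports "HOL-Number_Theory.Number_Theory"
begin

text \<open>F_p is represented by the residues {0..p-1} (as integers), arithmetic mod p.\<close>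

definition Fp :: "int \<Rightarrow> int set" where
  "Fp p = {0..p-1}"

definition QR :: "int \<Rightarrow> int set" where
  "QR p = {x \<in> Fp p. x \<noteq> 0 \<and> QuadRes p x}"

definition diff_exact :: "int \<Rightarrow> int set \<Rightarrow> int set \<Rightarrow> bool" where
  "diff_exact p A S \<longleftrightarrow>
     (\<forall>s\<in>S. \<exists>!ab. ab \<in> A \<times> A \<and> (fst ab - snd ab) mod p = s) \<and>
     (\<forall>a1\<in>A. \<forall>a2\<in>A. a1 \<noteq> a2 \<longrightarrow> (a1 - a2) mod p \<in> S)"

definition multipliers :: "int \<Rightarrow> int set \<Rightarrow> int set" where
  "multipliers p A = {\<mu> \<in> Fp p. \<mu> \<noteq> 0 \<and>
      (\<exists>g\<in>Fp p. (\<lambda>a. (\<mu> * a) mod p) ` A = (\<lambda>a. (a + g) mod p) ` A)}"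

end

theory Submission
  imports Defs "HOL-Number_Theory.Modular_Inverse"
begin

text \<open>
  If \<open>-A = A + g\<close>, then for distinct \<open>a, b \<in> A\<close> the difference \<open>a - b\<close> is represented
  both as \<open>a - b\<close> and as \<open>(-b - g) - (-a - g)\<close> with \<open>-a - g, -b - g \<in> A\<close>; uniqueness of
  representations forces \<open>a + b + g = 0\<close> for all distinct \<open>a, b\<close>, which is impossible once
  \<open>|A| \<ge> 3\<close>. And \<open>|A| \<ge> 3\<close> because \<open>|A|(|A| - 1) \<ge> |\<R>\<^sub>p|\<close> and \<open>\<R>\<^sub>p\<close> contains the
  distinct squares \<open>1, 4, 9\<close>.
  Since \<open>M\<^sub>A\<close> is closed under inversion and the only solutions of \<open>\<mu>\<^sup>2 = 1\<close> are \<open>\<plusminus>1\<close>,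
  inversion is a fixed-point-free involution on \<open>M\<^sub>A - {1}\<close> when \<open>-1 \<notin> M\<^sub>A\<close>; hence \<open>|M\<^sub>A|\<close> is odd.
\<close>

lemma even_card_fixpoint_free_involution:
  assumes "finite S"
    and "\<And>x. x \<in> S \<Longrightarrow> f x \<in> S" "\<And>x. x \<in> S \<Longrightarrow> f (f x) = x" "\<And>x. x \<in> S \<Longrightarrow> f x \<noteq> x"
  shows "even (card S)"
  using assms
proof (induction "card S" arbitrary: S rule: less_induct)
  case less
  show ?case
  proof (cases "S = {}")
    case False
    then obtain x where x: "x \<in> S"
      by blast
    let ?S' = "S - {x, f x}"
    have pair: "{x, f x} \<subseteq> S" "card {x, f x} = 2"
      using less.prems(2,4)[OF x] x by auto
    then have card_S: "card S = card ?S' + 2"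
      using card_mono[OF less.prems(1) pair(1)] card_Diff_subset[OF _ pair(1)] by simp
    have "f y \<in> ?S'" if y: "y \<in> ?S'" for y
    proof -
      have "f y \<noteq> x" "f y \<noteq> f x"
        using y less.prems(3)[of y] less.prems(3)[OF x] by force+
      then show ?thesis
        using y less.prems(2)[of y] by blast
    qed
    moreover have "card ?S' < card S"
      using card_S by simp
    ultimately have "even (card ?S')"
      using less.prems by (intro less.hyps) auto
    with card_S show ?thesis
      by simp
  qed simp
qed

lemma Fp_mod: "x \<in> Fp p \<Longrightarrow> x mod p = x"
  by (simp add: Fp_def)

lemma finite_Fp [simp]: "finite (Fp p)"
  by (simp add: Fp_def)

lemma mod_in_Fp: "p > 0 \<Longrightarrow> x mod p \<in> Fp p"
  by (simp add: Fp_def)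

lemma Fp_cong_imp_eq: "x \<in> Fp p \<Longrightarrow> y \<in> Fp p \<Longrightarrow> [x = y] (mod p) \<Longrightarrow> x = y"
  by (metis Fp_mod cong_def)

lemma coprime_if_in_Fp:
  assumes "prime p" "x \<in> Fp p" "x \<noteq> 0"
  shows "coprime x p"
proof -
  have "\<not> p dvd x"
    using assms by (auto simp: Fp_def dest: zdvd_imp_le)
  then show ?thesis
    using assms(1) by (simp add: prime_imp_coprime coprime_commute)
qed

lemma square_mod_in_QR:
  assumes "prime p" "\<not> p dvd x"
  shows "x\<^sup>2 mod p \<in> QR p"
proof -
  have "\<not> p dvd x\<^sup>2"
    using assms prime_dvd_power by blast
  then show ?thesis
    using assms(1) prime_gt_0_int
    by (auto simp: QR_def Fp_def QuadRes_def cong_def dvd_eq_mod_eq_0 intro!: exI[of _ x])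
qed

lemma three_le_card_QR:
  assumes "prime p" "p > 5"
  shows "3 \<le> card (QR p)"
proof -
  have small: "\<not> p dvd x" if "0 < x" "x \<le> 5" for x :: int
    using assms(2) that zdvd_imp_le by fastforce
  have "\<not> p dvd 2 ^ 3"
  proof
    assume "p dvd 2 ^ 3"
    then have "p dvd 2"
      by (rule prime_dvd_power[OF assms(1)])
    with small[of 2] show False
      by simp
  qed
  then have "9 mod p \<noteq> 1"
    using assms(2) mod_eq_dvd_iff[of 9 p 1] by auto
  moreover have "9 mod p \<noteq> 4"
    using small[of 5] assms(2) mod_eq_dvd_iff[of 9 p 4] by auto
  ultimately have "card {1, 4, 9 mod p} = 3"
    by simp
  moreover have "{1, 4, 9 mod p} \<subseteq> QR p"
    using square_mod_in_QR[OF assms(1) small[of 1]] square_mod_in_QR[OF assms(1) small[of 2]]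
      square_mod_in_QR[OF assms(1) small[of 3]] assms(2) by simp
  moreover have "finite (QR p)"
    by (rule finite_subset[of _ "Fp p"]) (auto simp: QR_def)
  ultimately show ?thesis
    by (metis card_mono)
qed

lemma card_le_if_diff_exact:
  assumes "finite A" "diff_exact p A S" "0 \<notin> S"
  shows "card S \<le> card A * (card A - 1)"
proof -
  let ?D = "A \<times> A - Id_on A"
  have "S \<subseteq> (\<lambda>(a, b). (a - b) mod p) ` ?D"
  proof
    fix s assume s: "s \<in> S"
    then obtain a b where ab: "a \<in> A" "b \<in> A" "(a - b) mod p = s"
      using assms(2) unfolding diff_exact_def by (metis mem_Times_iff prod.collapse)
    then have "(a, b) \<in> ?D"
      using s assms(3) by auto
    then show "s \<in> (\<lambda>(a, b). (a - b) mod p) ` ?D"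
      using ab(3) by force
  qed
  moreover have "finite ?D"
    using assms(1) by simp
  ultimately have "card S \<le> card ?D"
    by (meson card_image_le card_mono finite_imageI order_trans)
  also have "card ?D = card A * card A - card A"
  proof -
    have "Id_on A = (\<lambda>a. (a, a)) ` A"
      by (auto simp: Id_on_def)
    then have "card (Id_on A) = card A"
      by (simp add: card_image inj_on_def)
    then show ?thesis
      using assms(1) card_Diff_subset[OF _ Id_on_subset_Times[of A]]
      by (simp add: card_cartesian_product finite_subset[OF Id_on_subset_Times])
  qed
  finally show ?thesis
    by (simp add: diff_mult_distrib2)
qed

lemma image_mod_eq_image_mod_iff:
  "(\<lambda>a. f a mod p) ` A = (\<lambda>a. h a mod p) ` A \<longleftrightarrow>
     (\<forall>x\<in>A. \<exists>y\<in>A. [f x = h y] (mod p)) \<and> (\<forall>y\<in>A. \<exists>x\<in>A. [f x = h y] (mod p))"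
  unfolding set_eq_subset image_subset_iff image_iff cong_def by (auto simp: eq_commute)

lemma multipliers_iff_cong:
  assumes "p > 0"
  shows "\<mu> \<in> multipliers p A \<longleftrightarrow> \<mu> \<in> Fp p \<and> \<mu> \<noteq> 0 \<and>
    (\<exists>g. (\<forall>x\<in>A. \<exists>y\<in>A. [\<mu> * x = y + g] (mod p)) \<and> (\<forall>y\<in>A. \<exists>x\<in>A. [\<mu> * x = y + g] (mod p)))"
    (is "_ \<longleftrightarrow> _ \<and> _ \<and> (\<exists>g. ?shift g)")
proof -
  have "[u = y + g mod p] (mod p) \<longleftrightarrow> [u = y + g] (mod p)" for u y g :: int
    by (simp add: cong_def mod_add_right_eq)
  then have "?shift (g mod p) \<longleftrightarrow> ?shift g" for g
    by simp
  then have "(\<exists>g\<in>Fp p. ?shift g) \<longleftrightarrow> (\<exists>g. ?shift g)"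
    using mod_in_Fp[OF assms] by blast
  then show ?thesis
    unfolding multipliers_def image_mod_eq_image_mod_iff by blast
qed

lemma one_in_multipliers: "p > 1 \<Longrightarrow> 1 \<in> multipliers p A"
  by (auto simp: multipliers_iff_cong Fp_def intro!: exI[of _ 0]) (meson cong_refl)+

lemma cong_affine_swap:
  fixes \<mu> \<nu> x y g p :: int
  assumes "[\<mu> * \<nu> = 1] (mod p)"
  shows "[\<mu> * x = y + g] (mod p) \<longleftrightarrow> [\<nu> * y = x + - (\<nu> * g)] (mod p)"
proof -
  have "p dvd \<mu> * \<nu> - 1"
    using assms by (simp add: cong_iff_dvd_diff)
  moreover have "\<nu> * y - (x + - (\<nu> * g)) = x * (\<mu> * \<nu> - 1) - \<nu> * (\<mu> * x - (y + g))"
    and "\<mu> * x - (y + g) = (y + g) * (\<mu> * \<nu> - 1) - \<mu> * (\<nu> * y - (x + - (\<nu> * g)))"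
    by (simp_all add: algebra_simps)
  ultimately show ?thesis
    unfolding cong_iff_dvd_diff by (metis dvd_diff dvd_mult)
qed

lemma modular_inverse_in_Fp: "p > 0 \<Longrightarrow> modular_inverse p x \<in> Fp p"
  by (simp add: Fp_def modular_inverse_int_nonneg modular_inverse_int_less)

lemma modular_inverse_modular_inverse:
  assumes "coprime x p" "x \<in> Fp p"
  shows "modular_inverse p (modular_inverse p x) = x"
  using assms by (intro modular_inverse_int_eqI) (auto simp: Fp_def cong_modular_inverse2)

lemma modular_inverse_in_multipliers:
  assumes "prime p" "\<mu> \<in> multipliers p A"
  shows "modular_inverse p \<mu> \<in> multipliers p A"
proof -
  have p: "p > 0"
    using assms(1) prime_gt_0_int by blast
  obtain g where \<mu>: "\<mu> \<in> Fp p" "\<mu> \<noteq> 0"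
    and g: "\<forall>x\<in>A. \<exists>y\<in>A. [\<mu> * x = y + g] (mod p)" "\<forall>y\<in>A. \<exists>x\<in>A. [\<mu> * x = y + g] (mod p)"
    using assms(2) unfolding multipliers_iff_cong[OF p] by blast
  define \<nu> where "\<nu> = modular_inverse p \<mu>"
  have "coprime \<mu> p"
    using assms(1) \<mu> by (rule coprime_if_in_Fp)
  then have \<nu>: "\<nu> \<in> Fp p" "\<nu> > 0" "[\<mu> * \<nu> = 1] (mod p)"
    using modular_inverse_in_Fp[OF p] mult_modular_inverse_int_pos[OF prime_gt_1_int[OF assms(1)]]
    by (simp_all add: \<nu>_def cong_modular_inverse1)
  have "(\<forall>x\<in>A. \<exists>y\<in>A. [\<nu> * x = y + - (\<nu> * g)] (mod p)) \<and>
      (\<forall>y\<in>A. \<exists>x\<in>A. [\<nu> * x = y + - (\<nu> * g)] (mod p))"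
    using g unfolding cong_affine_swap[OF \<nu>(3)] by blast
  with \<nu>(1,2) show ?thesis
    unfolding multipliers_iff_cong[OF p] \<nu>_def[symmetric] by fastforce
qed

lemma modular_inverse_eq_self_imp_pm_one:
  assumes "prime p" "x \<in> Fp p" "x \<noteq> 0" "modular_inverse p x = x"
  shows "x = 1 \<or> x = p - 1"
proof -
  have "[x * x = 1] (mod p)"
    using cong_modular_inverse1[OF coprime_if_in_Fp[OF assms(1-3)]] assms(4) by simp
  moreover have "x > 0"
    using assms(2,3) by (auto simp: Fp_def)
  ultimately have "[x = 1] (mod p) \<or> [x = - 1] (mod p)"
    using cong_square[OF assms(1)] by blast
  moreover have "[- 1 = p - 1] (mod p)"
    by (simp add: cong_iff_dvd_diff)
  ultimately have "[x = 1] (mod p) \<or> [x = p - 1] (mod p)"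
    using cong_trans by blast
  moreover have "1 \<in> Fp p" "p - 1 \<in> Fp p"
    using prime_gt_1_int[OF assms(1)] by (auto simp: Fp_def)
  ultimately show ?thesis
    using Fp_cong_imp_eq[OF assms(2)] by blast
qed

lemma odd_card_multipliers:
  assumes "prime p" "p - 1 \<notin> multipliers p A"
  shows "odd (card (multipliers p A))"
proof -
  let ?M = "multipliers p A"
  have p: "p > 1"
    using assms(1) prime_gt_1_int by blast
  have fin: "finite ?M"
    by (rule finite_subset[of _ "Fp p"]) (auto simp: multipliers_def)
  have inverse: "modular_inverse p x \<in> ?M - {1} \<and> modular_inverse p (modular_inverse p x) = x
      \<and> modular_inverse p x \<noteq> x" if x: "x \<in> ?M - {1}" for x
  proof -
    have "x \<in> Fp p" "x \<noteq> 0"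
      using x unfolding multipliers_def by blast+
    then have involutive: "modular_inverse p (modular_inverse p x) = x"
      using modular_inverse_modular_inverse coprime_if_in_Fp[OF assms(1)] by blast
    have "modular_inverse p x \<noteq> 1"
    proof
      assume "modular_inverse p x = 1"
      then have "x = 1"
        using involutive modular_inverse_1[OF p] by simp
      with x show False
        by simp
    qed
    moreover have "modular_inverse p x \<noteq> x"
      using modular_inverse_eq_self_imp_pm_one[OF assms(1) \<open>x \<in> Fp p\<close> \<open>x \<noteq> 0\<close>] x assms(2) by blast
    moreover have "modular_inverse p x \<in> ?M"
      using modular_inverse_in_multipliers[OF assms(1)] x by blast
    ultimately show ?thesis
      using involutive by blast
  qed
  have "even (card (?M - {1}))"
    using fin inverse by (intro even_card_fixpoint_free_involution[where f = "modular_inverse p"]) auto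
  moreover have "card ?M = Suc (card (?M - {1}))"
    by (rule card.remove[OF fin one_in_multipliers[OF p]])
  ultimately show ?thesis
    by simp
qed

lemma sum_cong_zero_if_minus_one_multiplier:
  assumes "diff_exact p A S" "p - 1 \<in> multipliers p A"
  obtains g where "\<And>a b. a \<in> A \<Longrightarrow> b \<in> A \<Longrightarrow> a \<noteq> b \<Longrightarrow> [a + b + g = 0] (mod p)"
proof -
  have p: "p > 0"
    using assms(2) by (auto simp: multipliers_def Fp_def)
  obtain g where g: "\<forall>x\<in>A. \<exists>y\<in>A. [(p - 1) * x = y + g] (mod p)"
    using assms(2) unfolding multipliers_iff_cong[OF p] by blast
  have "(p - 1) * x - (y + g) = p * x - (y + x + g)" for x y
    by (simp add: algebra_simps)
  then have reflection: "\<exists>y\<in>A. [y + x + g = 0] (mod p)" if "x \<in> A" for x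
    using g that unfolding cong_iff_dvd_diff by (metis diff_0_right dvd_diff_right_iff dvd_triv_left)
  have "[a + b + g = 0] (mod p)" if ab: "a \<in> A" "b \<in> A" "a \<noteq> b" for a b
  proof -
    obtain a' b' where a': "a' \<in> A" "[a' + a + g = 0] (mod p)" and b': "b' \<in> A" "[b' + b + g = 0] (mod p)"
      using reflection ab by meson
    have "[(b' + b + g) - (a' + a + g) = 0] (mod p)"
      using cong_diff[OF b'(2) a'(2)] by simp
    then have "(b' - a') mod p = (a - b) mod p"
      by (simp add: cong_iff_dvd_diff mod_eq_dvd_iff algebra_simps)
    then have "(b', a') \<in> A \<times> A \<and> (fst (b', a') - snd (b', a')) mod p = (a - b) mod p"
      using a'(1) b'(1) by simp
    moreover have "(a, b) \<in> A \<times> A \<and> (fst (a, b) - snd (a, b)) mod p = (a - b) mod p"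
      using ab by simp
    moreover have "\<exists>!ab. ab \<in> A \<times> A \<and> (fst ab - snd ab) mod p = (a - b) mod p"
      using assms(1) ab unfolding diff_exact_def by blast
    ultimately have "(b', a') = (a, b)"
      by blast
    then show ?thesis
      using b'(2) by (simp add: add.commute)
  qed
  then show thesis
    using that by blast
qed

lemma card_le_2_if_minus_one_multiplier:
  assumes "A \<subseteq> Fp p" "diff_exact p A S" "p - 1 \<in> multipliers p A"
  shows "card A \<le> 2"
proof -
  obtain g where sum_zero: "\<And>a b. a \<in> A \<Longrightarrow> b \<in> A \<Longrightarrow> a \<noteq> b \<Longrightarrow> [a + b + g = 0] (mod p)"
    using sum_cong_zero_if_minus_one_multiplier[OF assms(2,3)] by blast
  have fin: "finite A"
    using assms(1) finite_Fp by (rule finite_subset)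
  show ?thesis
  proof (cases "\<exists>a\<in>A. \<exists>b\<in>A. a \<noteq> b")
    case True
    then obtain a b where ab: "a \<in> A" "b \<in> A" "a \<noteq> b"
      by blast
    have "c \<in> {a, b}" if "c \<in> A" for c
    proof (rule ccontr)
      assume "c \<notin> {a, b}"
      then have "[a + b + g = 0] (mod p)" "[a + c + g = 0] (mod p)"
        using sum_zero ab that by auto
      then have "[a + b + g = a + c + g] (mod p)"
        by (meson cong_sym cong_trans)
      then have "[b = c] (mod p)"
        by (simp add: cong_add_lcancel cong_add_rcancel)
      then have "b = c"
        using Fp_cong_imp_eq assms(1) ab(2) that by blast
      with \<open>c \<notin> {a, b}\<close> show False
        by simp
    qed
    then have "card A \<le> card {a, b}"
      by (intro card_mono) auto
    also have "\<dots> \<le> 2"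
      by (simp add: card_insert_le_m1)
    finally show ?thesis .
  next
    case False
    then show ?thesis
      using card_le_Suc0_iff_eq[OF fin] by auto
  qed
qed

theorem lemma1:
  fixes p :: int and A :: "int set"
  assumes "prime p" and "p > 5"
    and "A \<subseteq> Fp p"
    and "diff_exact p A (QR p)"
  shows "odd (card (multipliers p A)) \<and> (p - 1) \<notin> multipliers p A"
proof -
  have "finite A"
    using assms(3) finite_Fp by (rule finite_subset)
  have "3 \<le> card (QR p)"
    using assms(1,2) by (rule three_le_card_QR)
  also have "\<dots> \<le> card A * (card A - 1)"
    using \<open>finite A\<close> assms(4) by (rule card_le_if_diff_exact) (simp add: QR_def)
  finally have "\<not> card A \<le> 2"
    using mult_le_mono[of "card A" 2 "card A - 1" 1] by linarith
  then have "p - 1 \<notin> multipliers p A"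
    using card_le_2_if_minus_one_multiplier[OF assms(3,4)] by blast
  with assms(1) show ?thesis
    using odd_card_multipliers by blast
qed

end
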